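(* Let $u_{1:T}=(u_1,\ldots,u_T)\in(\mathbb{R}^d)^T$, let $1\le k\le T$ and $\tau\in[0:T-k]$, and let $w_{1:T}$ be obtained from $u_{1:T}$ by local averaging: $w_t=u_t$ for $t\notin[\tau+1:\tau+k]$ and $w_{\tau+1}=\cdots=w_{\tau+k}=k^{-1}\sum_{i=1}^k u_{\tau+i}$. Let $\bar u=T^{-1}\sum_t u_t$ and $\bar w=T^{-1}\sum_t w_t$. Then 1. $\sum_{t=1}^{T-1}\|w_{t+1}-w_t\|_2\le\sum_{t=1}^{T-1}\|u_{t+1}-u_t\|_2$; 2. $\sum_{t=1}^T\|w_t-\bar w\|_2\le\sum_{t=1}^T\|u_t-\bar u\|_2$; 3. $\sum_{t=1}^T\|w_t-\bar w\|_2^2\le\sum_{t=1}^T\|u_t-\bar u\|_2^2$; 4. $\sum_{t=1}^T\|w_t\|_2\le\sum_{t=1}^T\|u_t\|_2$ and $\sum_{t=1}^T\|w_t\|_2^2\le\sum_{t=1}^T\|u_t\|_2^2$. *)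

theory Defs
  imports "HOL-Analysis.Analysis"
begin

definition local_avg :: "nat \<Rightarrow> nat \<Rightarrow> (nat \<Rightarrow> real ^ 'd) \<Rightarrow> nat \<Rightarrow> real ^ 'd" where
  "local_avg k \<tau> u t =
     (if t \<in> {\<tau>+1..\<tau>+k} then (1 / real k) *\<^sub>R (\<Sum>i=1..k. u (\<tau> + i)) else u t)"

definition seq_mean :: "nat \<Rightarrow> (nat \<Rightarrow> real ^ 'd) \<Rightarrow> real ^ 'd" where
  "seq_mean T u = (1 / real T) *\<^sub>R (\<Sum>t=1..T. u t)"

end

theory Submission
  imports Defs
begin

(* Local averaging replaces the window entries by their mean and leaves the rest alone, so it
  preserves the sum (hence the mean) and, by Jensen's inequality, can only decrease the sum of
  f (u t) for every convex f; items 2-4 are the instances f x = norm (x - c) and its square, with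
  c the common mean or 0.  For the total variation, w is the average over i = 1..k of the
  reparametrisations u o sigma_i, where the monotone map sigma_i collapses the window to the
  point tau + i: total variation is convex and cannot increase under a monotone reparametrisation
  that keeps [1, T] inside [1, T]. *)

lemma convex_on_power2_nonneg:
  assumes "convex_on S f" and "\<And>x. x \<in> S \<Longrightarrow> 0 \<le> f x"
  shows "convex_on S (\<lambda>x. (f x)\<^sup>2)"
proof
  show "convex S" using assms(1) by (rule convex_on_imp_convex)
  fix t :: real and x y assume t: "0 < t" "t < 1" and xy: "x \<in> S" "y \<in> S"
  have "f ((1 - t) *\<^sub>R x + t *\<^sub>R y) \<le> (1 - t) * f x + t * f y"
    using convex_onD[OF assms(1)] t xy by simp
  moreover have "0 \<le> f ((1 - t) *\<^sub>R x + t *\<^sub>R y)"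
    using assms xy t by (intro assms(2) convexD[OF convex_on_imp_convex[OF assms(1)]]) auto
  ultimately have "(f ((1 - t) *\<^sub>R x + t *\<^sub>R y))\<^sup>2 \<le> ((1 - t) * f x + t * f y)\<^sup>2"
    by (rule power_mono)
  also have "\<dots> \<le> (1 - t) * (f x)\<^sup>2 + t * (f y)\<^sup>2"
    using convex_onD[OF convex_power2, of t "f x" "f y"] t by simp
  finally show "(f ((1 - t) *\<^sub>R x + t *\<^sub>R y))\<^sup>2 \<le> (1 - t) * (f x)\<^sup>2 + t * (f y)\<^sup>2" .
qed

lemma convex_on_norm_diff: "convex_on UNIV (\<lambda>x. norm (x - c))"
  using convex_on_dist[of UNIV c] by (simp add: dist_norm norm_minus_commute)

lemma sum_comp_local_avg:
  fixes g :: "real ^ 'd \<Rightarrow> 'a::real_vector"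
  assumes "\<tau> + k \<le> T"
  shows "(\<Sum>t=1..T. g (local_avg k \<tau> u t)) =
    (\<Sum>t=1..T. g (u t)) + (real k *\<^sub>R g ((1 / real k) *\<^sub>R (\<Sum>i=1..k. u (\<tau> + i))) - (\<Sum>i=1..k. g (u (\<tau> + i))))"
proof -
  let ?W = "{\<tau>+1..\<tau>+k}" and ?m = "(1 / real k) *\<^sub>R (\<Sum>i=1..k. u (\<tau> + i))"
  have W: "?W \<subseteq> {1..T}" using assms by auto
  have "(\<Sum>t\<in>{1..T} - ?W. g (local_avg k \<tau> u t)) = (\<Sum>t\<in>{1..T} - ?W. g (u t))"
    by (rule sum.cong) (auto simp: local_avg_def)
  moreover have "(\<Sum>t\<in>?W. g (local_avg k \<tau> u t)) = (\<Sum>t\<in>?W. g ?m)"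
    by (rule sum.cong) (auto simp: local_avg_def)
  ultimately have "(\<Sum>t=1..T. g (local_avg k \<tau> u t)) = (\<Sum>t\<in>{1..T} - ?W. g (u t)) + real k *\<^sub>R g ?m"
    using sum.subset_diff[OF W, of "\<lambda>t. g (local_avg k \<tau> u t)"] by (simp add: sum_constant_scaleR)
  moreover have "(\<Sum>t=1..T. g (u t)) = (\<Sum>t\<in>{1..T} - ?W. g (u t)) + (\<Sum>i=1..k. g (u (\<tau> + i)))"
    using sum.subset_diff[OF W, of "\<lambda>t. g (u t)"] sum.shift_bounds_cl_nat_ivl[of "\<lambda>t. g (u t)" 1 \<tau> k]
    by (simp add: add.commute)
  ultimately show ?thesis by simp
qed

lemma sum_local_avg_eq:
  assumes "\<tau> + k \<le> T"
  shows "(\<Sum>t=1..T. local_avg k \<tau> u t) = (\<Sum>t=1..T. u t)"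
  using sum_comp_local_avg[OF assms, of "\<lambda>x. x"] by (cases "k = 0") simp_all

lemma seq_mean_local_avg:
  assumes "\<tau> + k \<le> T"
  shows "seq_mean T (local_avg k \<tau> u) = seq_mean T u"
  unfolding seq_mean_def sum_local_avg_eq[OF assms] ..

lemma sum_convex_local_avg_le:
  assumes "convex_on UNIV f" and "\<tau> + k \<le> T"
  shows "(\<Sum>t=1..T. f (local_avg k \<tau> u t)) \<le> (\<Sum>t=1..T. f (u t))"
proof (cases "k = 0")
  case False
  let ?m = "(1 / real k) *\<^sub>R (\<Sum>i=1..k. u (\<tau> + i))"
  have "f ?m \<le> (\<Sum>i=1..k. (1 / real k) * f (u (\<tau> + i)))"
    using convex_on_sum[OF _ _ assms(1), of "{1..k}" "\<lambda>_. 1 / real k" "\<lambda>i. u (\<tau> + i)"] False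
    by (simp add: scaleR_sum_right)
  then have "real k * f ?m \<le> real k * (\<Sum>i=1..k. (1 / real k) * f (u (\<tau> + i)))"
    by (rule mult_left_mono) simp
  also have "\<dots> = (\<Sum>i=1..k. f (u (\<tau> + i)))"
    using False by (simp add: sum_distrib_left)
  finally show ?thesis using sum_comp_local_avg[OF assms(2), of f] by simp
qed (simp add: local_avg_def)

definition total_variation :: "(nat \<Rightarrow> 'a::real_normed_vector) \<Rightarrow> nat \<Rightarrow> nat \<Rightarrow> real" where
  "total_variation u a b = (\<Sum>t=a..<b. norm (u (Suc t) - u t))"

lemma total_variation_concat:
  "a \<le> b \<Longrightarrow> b \<le> c \<Longrightarrow> total_variation u a b + total_variation u b c = total_variation u a c"
  unfolding total_variation_def by (rule sum.atLeastLessThan_concat)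

lemma total_variation_mono_interval:
  "a \<le> a' \<Longrightarrow> b' \<le> b \<Longrightarrow> total_variation u a' b' \<le> total_variation u a b"
  unfolding total_variation_def by (rule sum_mono2) auto

lemma norm_diff_le_total_variation: "a \<le> b \<Longrightarrow> norm (u b - u a) \<le> total_variation u a b"
  unfolding total_variation_def
  using sum_Suc_diff'[of a b u] norm_sum[of "\<lambda>t. u (Suc t) - u t" "{a..<b}"] by simp

lemma total_variation_scaleR: "total_variation (\<lambda>t. c *\<^sub>R u t) a b = \<bar>c\<bar> * total_variation u a b"
  unfolding total_variation_def by (simp add: sum_distrib_left flip: scaleR_diff_right)

lemma total_variation_sum_le:
  "total_variation (\<lambda>t. \<Sum>i\<in>I. v i t) a b \<le> (\<Sum>i\<in>I. total_variation (v i) a b)"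
proof -
  have "total_variation (\<lambda>t. \<Sum>i\<in>I. v i t) a b = (\<Sum>t=a..<b. norm (\<Sum>i\<in>I. v i (Suc t) - v i t))"
    unfolding total_variation_def by (simp add: sum_subtractf)
  also have "\<dots> \<le> (\<Sum>t=a..<b. \<Sum>i\<in>I. norm (v i (Suc t) - v i t))"
    by (intro sum_mono norm_sum)
  also have "\<dots> = (\<Sum>i\<in>I. total_variation (v i) a b)"
    unfolding total_variation_def by (rule sum.swap)
  finally show ?thesis .
qed

lemma total_variation_comp_mono_le:
  assumes "mono \<sigma>" and "a \<le> b"
  shows "total_variation (u \<circ> \<sigma>) a b \<le> total_variation u (\<sigma> a) (\<sigma> b)"
  using assms(2)
proof (induction b rule: dec_induct)
  case base
  then show ?case by (simp add: total_variation_def)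
next
  case (step b)
  have "total_variation (u \<circ> \<sigma>) a (Suc b) = total_variation (u \<circ> \<sigma>) a b + norm (u (\<sigma> (Suc b)) - u (\<sigma> b))"
    using step.hyps by (simp add: total_variation_def)
  also have "\<dots> \<le> total_variation u (\<sigma> a) (\<sigma> b) + total_variation u (\<sigma> b) (\<sigma> (Suc b))"
    using step.IH norm_diff_le_total_variation[of "\<sigma> b" "\<sigma> (Suc b)" u] monoD[OF assms(1)]
    by (intro add_mono) (auto simp: o_def)
  also have "\<dots> = total_variation u (\<sigma> a) (\<sigma> (Suc b))"
    using step.hyps monoD[OF assms(1)] by (intro total_variation_concat) auto
  finally show ?case .
qed

definition collapse_window :: "nat \<Rightarrow> nat \<Rightarrow> nat \<Rightarrow> nat \<Rightarrow> nat" where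
  "collapse_window k \<tau> i t = (if t \<in> {\<tau>+1..\<tau>+k} then \<tau> + i else t)"

lemma mono_collapse_window: "i \<le> k \<Longrightarrow> mono (collapse_window k \<tau> i)"
  by (rule monoI) (auto simp: collapse_window_def)

lemma local_avg_eq_mean_collapse_window:
  assumes "1 \<le> k"
  shows "local_avg k \<tau> u t = (1 / real k) *\<^sub>R (\<Sum>i=1..k. u (collapse_window k \<tau> i t))"
proof (cases "t \<in> {\<tau>+1..\<tau>+k}")
  case False
  then have "(\<Sum>i=1..k. u (collapse_window k \<tau> i t)) = real k *\<^sub>R u t"
    unfolding collapse_window_def if_not_P[OF False] by (simp only: sum_constant_scaleR card_atLeastAtMost) simp
  with assms show ?thesis unfolding local_avg_def if_not_P[OF False] by simp
qed (simp add: local_avg_def collapse_window_def)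

lemma total_variation_local_avg_le:
  assumes "1 \<le> k" and "\<tau> + k \<le> T"
  shows "total_variation (local_avg k \<tau> u) 1 T \<le> total_variation u 1 T"
proof -
  let ?\<sigma> = "collapse_window k \<tau>"
  have "local_avg k \<tau> u = (\<lambda>t. (1 / real k) *\<^sub>R (\<Sum>i=1..k. u (?\<sigma> i t)))"
    using local_avg_eq_mean_collapse_window[OF assms(1)] by blast
  then have "total_variation (local_avg k \<tau> u) 1 T = (1 / real k) * total_variation (\<lambda>t. \<Sum>i=1..k. u (?\<sigma> i t)) 1 T"
    by (simp add: total_variation_scaleR)
  also have "\<dots> \<le> (1 / real k) * (\<Sum>i=1..k. total_variation (u \<circ> ?\<sigma> i) 1 T)"
    unfolding comp_def by (intro mult_left_mono total_variation_sum_le) simp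
  also have "\<dots> \<le> (1 / real k) * (\<Sum>i=1..k. total_variation u 1 T)"
  proof (intro mult_left_mono sum_mono)
    fix i assume i: "i \<in> {1..k}"
    have "total_variation (u \<circ> ?\<sigma> i) 1 T \<le> total_variation u (?\<sigma> i 1) (?\<sigma> i T)"
      using i assms by (intro total_variation_comp_mono_le mono_collapse_window) auto
    also have "\<dots> \<le> total_variation u 1 T"
      using i assms by (intro total_variation_mono_interval) (auto simp: collapse_window_def)
    finally show "total_variation (u \<circ> ?\<sigma> i) 1 T \<le> total_variation u 1 T" .
  qed simp
  also have "\<dots> = total_variation u 1 T"
    using assms(1) by simp
  finally show ?thesis .
qed

theorem lemma10:
  fixes u w :: "nat \<Rightarrow> real ^ 'd" and T k \<tau> :: nat
  assumes "1 \<le> k" and "k \<le> T" and "\<tau> \<le> T - k"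
    and "w = local_avg k \<tau> u"
  shows "(\<Sum>t=1..T-1. norm (w (t+1) - w t)) \<le> (\<Sum>t=1..T-1. norm (u (t+1) - u t)) \<and>
     (\<Sum>t=1..T. norm (w t - seq_mean T w)) \<le> (\<Sum>t=1..T. norm (u t - seq_mean T u)) \<and>
     (\<Sum>t=1..T. (norm (w t - seq_mean T w))\<^sup>2) \<le> (\<Sum>t=1..T. (norm (u t - seq_mean T u))\<^sup>2) \<and>
     (\<Sum>t=1..T. norm (w t)) \<le> (\<Sum>t=1..T. norm (u t)) \<and>
     (\<Sum>t=1..T. (norm (w t))\<^sup>2) \<le> (\<Sum>t=1..T. (norm (u t))\<^sup>2)"
proof -
  have window: "\<tau> + k \<le> T" using assms(2,3) by simp
  have jensen: "(\<Sum>t=1..T. f (w t)) \<le> (\<Sum>t=1..T. f (u t))" if "convex_on UNIV f" for f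
    using sum_convex_local_avg_le[OF that window] assms(4) by simp
  have centred: "(\<Sum>t=1..T. norm (w t - c)) \<le> (\<Sum>t=1..T. norm (u t - c))"
    and centred_sq: "(\<Sum>t=1..T. (norm (w t - c))\<^sup>2) \<le> (\<Sum>t=1..T. (norm (u t - c))\<^sup>2)" for c
    by (intro jensen convex_on_norm_diff convex_on_power2_nonneg; simp)+
  have mean: "seq_mean T w = seq_mean T u"
    using seq_mean_local_avg[OF window] assms(4) by simp
  have "total_variation w 1 T \<le> total_variation u 1 T"
    using total_variation_local_avg_le[OF assms(1) window] assms(4) by simp
  moreover have "{1..T-1} = {1..<T}"
    using assms(1,2) by auto
  ultimately have variation: "(\<Sum>t=1..T-1. norm (w (t+1) - w t)) \<le> (\<Sum>t=1..T-1. norm (u (t+1) - u t))"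
    by (simp add: total_variation_def)
  show ?thesis
    using variation centred[of "seq_mean T u"] centred_sq[of "seq_mean T u"] centred[of 0] centred_sq[of 0]
    unfolding mean by simp
qed

end
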